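(* Let $K$ be a totally real number field. If $\alpha\in\mathcal{O}_K^+$ lies on the sail $\mathcal{S}_K$ (i.e. $\iota_M(\alpha)\in\mathcal{S}_K$), then $\alpha$ is indecomposable.
   Context: Let $n=[K:\mathbb{Q}]$, $\tau_1,\dots,\tau_n$ the real embeddings, $\iota_M:K\to\mathbb{R}^n$, $\alpha\mapsto(\tau_1(\alpha),\dots,\tau_n(\alpha))$ the Minkowski embedding and $\Lambda=\iota_M(\mathcal{O}_K)$. $\mathcal{O}_K^+$ is the set of totally positive elements of $\mathcal{O}_K$, so $\iota_M(\mathcal{O}_K^+)=\Lambda\cap\mathbb{R}_{>0}^n$. The Klein polyhedron is the convex hull $\mathcal{K}_K=\operatorname{Conv}(\Lambda\cap\mathbb{R}_{>0}^n)$ and the sail $\mathcal{S}_K$ is its boundary. An element $\alpha\in\mathcal{O}_K^+$ is indecomposable if it cannot be written as $\beta+\gamma$ with $\beta,\gamma\in\mathcal{O}_K^+$. *)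

theory Defs
  imports "HOL-Analysis.Analysis" "HOL-Computational_Algebra.Polynomial"
begin

text \<open>A number field is modelled as a subfield K of the complex numbers that is
finite-dimensional as a vector space over the rationals.\<close>

definition subfield_of_complex :: "complex set \<Rightarrow> bool" where
  "subfield_of_complex K \<longleftrightarrow> 0 \<in> K \<and> 1 \<in> K \<and>
     (\<forall>x\<in>K. \<forall>y\<in>K. x + y \<in> K \<and> x * y \<in> K) \<and>
     (\<forall>x\<in>K. - x \<in> K \<and> inverse x \<in> K)"

definition number_field :: "complex set \<Rightarrow> bool" where
  "number_field K \<longleftrightarrow> subfield_of_complex K \<and>
     (\<exists>B. finite B \<and> B \<subseteq> K \<and>
        (\<forall>x\<in>K. \<exists>c :: complex \<Rightarrow> rat. x = (\<Sum>b\<in>B. of_rat (c b) * b)))"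

text \<open>Field embeddings of K into the complex numbers (only their values on K matter).\<close>

definition field_embedding :: "complex set \<Rightarrow> (complex \<Rightarrow> complex) \<Rightarrow> bool" where
  "field_embedding K \<sigma> \<longleftrightarrow> \<sigma> 1 = 1 \<and>
     (\<forall>x\<in>K. \<forall>y\<in>K. \<sigma> (x + y) = \<sigma> x + \<sigma> y \<and> \<sigma> (x * y) = \<sigma> x * \<sigma> y)"

definition totally_real :: "complex set \<Rightarrow> bool" where
  "totally_real K \<longleftrightarrow> (\<forall>\<sigma>. field_embedding K \<sigma> \<longrightarrow> (\<forall>x\<in>K. \<sigma> x \<in> \<real>))"

text \<open>tau enumerates all embeddings of K, each exactly once (indexed by a finite
type 'n, so n = CARD('n) = [K:Q]).\<close>

definition embedding_enumeration ::
    "complex set \<Rightarrow> ('n::finite \<Rightarrow> complex \<Rightarrow> complex) \<Rightarrow> bool" where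
  "embedding_enumeration K \<tau> \<longleftrightarrow>
     (\<forall>i. field_embedding K (\<tau> i)) \<and>
     (\<forall>i j. i \<noteq> j \<longrightarrow> (\<exists>x\<in>K. \<tau> i x \<noteq> \<tau> j x)) \<and>
     (\<forall>\<sigma>. field_embedding K \<sigma> \<longrightarrow> (\<exists>i. \<forall>x\<in>K. \<sigma> x = \<tau> i x))"

definition ring_of_integers :: "complex set \<Rightarrow> complex set" where
  "ring_of_integers K = {x \<in> K. algebraic_int x}"

definition minkowski :: "('n::finite \<Rightarrow> complex \<Rightarrow> complex) \<Rightarrow> complex \<Rightarrow> real ^ 'n" where
  "minkowski \<tau> \<alpha> = (\<chi> i. Re (\<tau> i \<alpha>))"

definition totally_positive_integers ::
    "complex set \<Rightarrow> ('n::finite \<Rightarrow> complex \<Rightarrow> complex) \<Rightarrow> complex set" where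
  "totally_positive_integers K \<tau> =
     {\<alpha> \<in> ring_of_integers K. \<forall>i. \<tau> i \<alpha> \<in> \<real> \<and> 0 < Re (\<tau> i \<alpha>)}"

definition klein_polyhedron ::
    "complex set \<Rightarrow> ('n::finite \<Rightarrow> complex \<Rightarrow> complex) \<Rightarrow> (real ^ 'n) set" where
  "klein_polyhedron K \<tau> =
     convex hull (minkowski \<tau> ` ring_of_integers K \<inter> {x. \<forall>i. 0 < x $ i})"

definition sail ::
    "complex set \<Rightarrow> ('n::finite \<Rightarrow> complex \<Rightarrow> complex) \<Rightarrow> (real ^ 'n) set" where
  "sail K \<tau> = frontier (klein_polyhedron K \<tau>)"

definition indecomposable ::
    "complex set \<Rightarrow> ('n::finite \<Rightarrow> complex \<Rightarrow> complex) \<Rightarrow> complex \<Rightarrow> bool" where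
  "indecomposable K \<tau> \<alpha> \<longleftrightarrow> \<alpha> \<in> totally_positive_integers K \<tau> \<and>
     \<not> (\<exists>\<beta>\<in>totally_positive_integers K \<tau>. \<exists>\<gamma>\<in>totally_positive_integers K \<tau>. \<alpha> = \<beta> + \<gamma>)"

end

(*
  If \<alpha> = \<beta> + \<gamma> with \<beta>, \<gamma> totally positive, then for every \<delta> \<in> O_K and every large N
  the integer \<beta> + N \<gamma> \<plusminus> \<delta> is again totally positive, so \<iota> \<alpha> \<plusminus> \<iota> \<delta> / N is a convex
  combination of \<iota> \<beta> and \<iota> (\<beta> + N \<gamma> \<plusminus> \<delta>) and lies in the Klein polyhedron.
  Because the embeddings are linearly independent (Dedekind), \<iota> O_K spans R^n, and a convex
  set containing segments through a point in a spanning set of directions contains a ball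
  around that point. Hence \<iota> \<alpha> is an interior point of the Klein polyhedron, not a point
  of the sail.
*)

theory Submission
  imports Defs "Jordan_Normal_Form.Char_Poly"
begin

section \<open>Sums and products of algebraic integers\<close>

global_interpretation int_module: Modules.module "\<lambda>(k::int) (x::'a::comm_ring_1). of_int k * x"
  defines int_span = int_module.span
  by standard (simp_all add: algebra_simps)

lemma Ints_mult_in_int_span:
  assumes "c \<in> \<int>" "u \<in> F"
  shows "c * u \<in> int_span F"
proof -
  from assms(1) obtain k where "c = of_int k" by (auto elim: Ints_cases)
  then show ?thesis
    using int_module.span_scale[OF int_module.span_base[OF assms(2)], of k] by simp
qed

lemma mult_in_int_span:
  assumes "x \<in> int_span F" and "\<And>u. u \<in> F \<Longrightarrow> a * u \<in> int_span G"
  shows "a * x \<in> int_span G"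
  using assms(1)
proof (induction rule: int_module.span_induct_alt)
  case base
  show ?case by (simp add: int_module.span_zero)
next
  case (step k u y)
  have "a * (of_int k * u + y) = of_int k * (a * u) + a * y"
    by (simp add: algebra_simps)
  then show ?case
    using step assms(2) by (simp add: int_module.span_add int_module.span_scale)
qed

lemma algebraic_int_eigenvalue:
  fixes A :: "int mat" and x :: "'a::field_char_0"
  assumes A: "A \<in> carrier_mat n n" and "eigenvalue (map_mat of_int A) x"
  shows "algebraic_int x"
proof -
  have "map_mat of_int A \<in> carrier_mat n n"
    using A by simp
  with assms(2) have "poly (char_poly (map_mat of_int A)) x = 0"
    using eigenvalue_root_char_poly by blast
  moreover have "char_poly (map_mat of_int A) = map_poly of_int (char_poly A)"
    by (rule of_int_hom.char_poly_hom[OF A])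
  moreover have "lead_coeff (char_poly A) = 1"
    using degree_monic_char_poly[OF A] by simp
  ultimately show ?thesis
    unfolding algebraic_int_altdef_ipoly by metis
qed

lemma algebraic_int_if_int_span_stable:
  fixes x :: "'a::field_char_0"
  assumes F: "finite F" and nonzero: "\<exists>v\<in>F. v \<noteq> 0"
    and stable: "\<And>u. u \<in> F \<Longrightarrow> x * u \<in> int_span F"
  shows "algebraic_int x"
proof -
  \<comment> \<open>\<open>x\<close> is an eigenvalue of the integer matrix of multiplication by \<open>x\<close> on the generators.\<close>
  obtain vs where vs: "distinct vs" "set vs = F"
    using finite_distinct_list[OF F] by blast
  define n where "n = length vs"
  have bij: "bij_betw ((!) vs) {..<n} F"
    using bij_betw_nth[OF vs(1)] vs(2) n_def by auto
  have "\<exists>a. x * vs ! j = (\<Sum>k<n. of_int (a k) * vs ! k)" if "j < n" for j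
  proof -
    from stable[of "vs ! j"] that obtain c where "x * vs ! j = (\<Sum>u\<in>F. of_int (c u) * u)"
      using vs(2) n_def int_module.span_finite[OF F] by auto
    then show ?thesis
      using sum.reindex_bij_betw[OF bij, of "\<lambda>u. of_int (c u) * u"]
      by (intro exI[of _ "\<lambda>k. c (vs ! k)"]) simp
  qed
  then obtain a where a: "\<And>j. j < n \<Longrightarrow> x * vs ! j = (\<Sum>k<n. of_int (a j k) * vs ! k)"
    by metis
  define A :: "int mat" where "A = Matrix.mat n n (\<lambda>(j, k). a j k)"
  define w :: "'a Matrix.vec" where "w = Matrix.vec n (\<lambda>k. vs ! k)"
  have A: "A \<in> carrier_mat n n"
    by (simp add: A_def)
  have "map_mat of_int A *\<^sub>v w = x \<cdot>\<^sub>v w"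
  proof (rule eq_vecI)
    fix j assume "j < dim_vec (x \<cdot>\<^sub>v w)"
    then have j: "j < n" by (simp add: w_def)
    then have "(map_mat of_int A *\<^sub>v w) $ j = (\<Sum>k<n. of_int (a j k) * vs ! k)"
      by (auto simp: A_def w_def lessThan_atLeast0 Matrix.row_def Matrix.scalar_prod_def
          intro!: sum.cong)
    then show "(map_mat of_int A *\<^sub>v w) $ j = (x \<cdot>\<^sub>v w) $ j"
      using a[OF j] j by (simp add: w_def)
  qed (simp add: w_def A_def)
  moreover have "w \<noteq> 0\<^sub>v n"
  proof
    assume "w = 0\<^sub>v n"
    from nonzero obtain k where "k < n" "vs ! k \<noteq> 0"
      using vs(2) n_def by (auto simp: in_set_conv_nth)
    with \<open>w = 0\<^sub>v n\<close> show False
      by (metis index_vec index_zero_vec(1) w_def)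
  qed
  moreover have "w \<in> carrier_vec n"
    by (simp add: w_def)
  ultimately have "eigenvalue (map_mat of_int A) x"
    using A unfolding eigenvalue_def eigenvector_def by (intro exI[of _ w]) auto
  with A show ?thesis
    by (rule algebraic_int_eigenvalue)
qed

lemma algebraic_int_powers_in_int_span:
  fixes x :: "'a::field_char_0"
  assumes "algebraic_int x"
  obtains d where "d > 0" "\<And>k. x ^ k \<in> int_span ((\<lambda>i. x ^ i) ` {..<d})"
proof -
  from assms obtain p where p: "poly (map_poly of_int p) x = 0" "lead_coeff p = 1"
    unfolding algebraic_int_altdef_ipoly by blast
  define d where "d = degree p"
  define F where "F = (\<lambda>i. x ^ i) ` {..<d}"
  have "d > 0"
  proof (rule ccontr)
    assume "\<not> d > 0"
    then have "p = 1"
      using p(2) by (auto simp: d_def elim: degree_eq_zeroE)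
    with p(1) show False by simp
  qed
  have low: "x ^ i \<in> int_span F" if "i < d" for i
    using that by (auto simp: F_def intro: int_module.span_base)
  have "0 = (\<Sum>i\<le>d. of_int (coeff p i) * x ^ i)"
    using p(1) by (simp add: poly_altdef d_def degree_map_poly_le coeff_map_poly)
  also have "\<dots> = (\<Sum>i<d. of_int (coeff p i) * x ^ i) + x ^ d"
    using p(2) by (simp add: lessThan_Suc_atMost[symmetric] d_def)
  finally have "x ^ d = (\<Sum>i<d. of_int (- coeff p i) * x ^ i)"
    by (simp add: sum_negf eq_neg_iff_add_eq_0 add.commute)
  also have "\<dots> \<in> int_span F"
    by (intro int_module.span_sum int_module.span_scale low) auto
  finally have top: "x ^ d \<in> int_span F" .
  have "x ^ k \<in> int_span F" for k
  proof (induction k)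
    case 0
    show ?case using low \<open>d > 0\<close> by (metis power_0)
  next
    case (Suc k)
    have "x * x ^ k \<in> int_span F"
    proof (rule mult_in_int_span[OF Suc])
      fix u assume "u \<in> F"
      then obtain i where i: "i < d" "u = x ^ i" by (auto simp: F_def)
      then consider "Suc i < d" | "Suc i = d" by linarith
      then show "x * u \<in> int_span F"
        by cases (use i low[of "Suc i"] top in auto)
    qed
    then show ?case by simp
  qed
  with \<open>d > 0\<close> show ?thesis
    using that F_def by blast
qed

lemma algebraic_int_monomials_in_int_span:
  fixes x y :: "'a::field_char_0"
  assumes "algebraic_int x" "algebraic_int y"
  obtains F where "finite F" "1 \<in> F" "\<And>w. w \<in> F \<Longrightarrow> \<exists>i j. w = x ^ i * y ^ j"
    "\<And>i j. x ^ i * y ^ j \<in> int_span F"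
proof -
  obtain d where d: "d > 0" "\<And>k. x ^ k \<in> int_span ((\<lambda>i. x ^ i) ` {..<d})"
    using algebraic_int_powers_in_int_span[OF assms(1)] by blast
  obtain e where e: "e > 0" "\<And>l. y ^ l \<in> int_span ((\<lambda>j. y ^ j) ` {..<e})"
    using algebraic_int_powers_in_int_span[OF assms(2)] by blast
  define F where "F = (\<lambda>(i, j). x ^ i * y ^ j) ` ({..<d} \<times> {..<e})"
  have "x ^ i * y ^ l \<in> int_span F" if "i < d" for i l
    by (rule mult_in_int_span[OF e(2)])
      (use that in \<open>auto simp: F_def intro!: int_module.span_base\<close>)
  then have "y ^ l * x ^ k \<in> int_span F" for k l
    by (intro mult_in_int_span[OF d(2)]) (auto simp: mult.commute)
  then have "x ^ k * y ^ l \<in> int_span F" for k l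
    by (simp add: mult.commute)
  moreover have "1 \<in> F"
    using d e by (force simp: F_def)
  moreover have "\<exists>i j. w = x ^ i * y ^ j" if "w \<in> F" for w
    using that by (auto simp: F_def)
  ultimately show ?thesis
    using that[of F] by (simp add: F_def)
qed

lemma algebraic_int_add:
  fixes x y :: "'a::field_char_0"
  assumes "algebraic_int x" "algebraic_int y"
  shows "algebraic_int (x + y)"
proof -
  obtain F where F: "finite F" "1 \<in> F" "\<And>w. w \<in> F \<Longrightarrow> \<exists>i j. w = x ^ i * y ^ j"
    "\<And>i j. x ^ i * y ^ j \<in> int_span F"
    using algebraic_int_monomials_in_int_span[OF assms] by blast
  show ?thesis
  proof (rule algebraic_int_if_int_span_stable[OF F(1)])
    fix w assume "w \<in> F"
    then obtain i j where "w = x ^ i * y ^ j" using F(3) by blast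
    then have "(x + y) * w = x ^ Suc i * y ^ j + x ^ i * y ^ Suc j"
      by (simp add: algebra_simps)
    then show "(x + y) * w \<in> int_span F"
      by (metis F(4) int_module.span_add)
  qed (use F(2) one_neq_zero in blast)
qed

lemma algebraic_int_mult:
  fixes x y :: "'a::field_char_0"
  assumes "algebraic_int x" "algebraic_int y"
  shows "algebraic_int (x * y)"
proof -
  obtain F where F: "finite F" "1 \<in> F" "\<And>w. w \<in> F \<Longrightarrow> \<exists>i j. w = x ^ i * y ^ j"
    "\<And>i j. x ^ i * y ^ j \<in> int_span F"
    using algebraic_int_monomials_in_int_span[OF assms] by blast
  show ?thesis
  proof (rule algebraic_int_if_int_span_stable[OF F(1)])
    fix w assume "w \<in> F"
    then obtain i j where "w = x ^ i * y ^ j" using F(3) by blast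
    then have "x * y * w = x ^ Suc i * y ^ Suc j"
      by (simp add: algebra_simps)
    then show "x * y * w \<in> int_span F"
      by (metis F(4))
  qed (use F(2) one_neq_zero in blast)
qed

section \<open>Number fields\<close>

lemma rat_common_denominator:
  fixes R :: "rat set"
  assumes "finite R"
  shows "\<exists>d::int. d > 0 \<and> (\<forall>r\<in>R. of_int d * r \<in> \<int>)"
  using assms
proof (induction rule: finite_induct)
  case empty
  show ?case by (intro exI[of _ 1]) simp
next
  case (insert r R)
  then obtain d where d: "d > 0" "\<forall>s\<in>R. of_int d * s \<in> \<int>" by blast
  obtain p q where pq: "quotient_of r = (p, q)" by (cases "quotient_of r")
  have q: "q > 0"
    using quotient_of_denom_pos[OF pq] .
  then have q_r: "of_int q * r = of_int p"
    using quotient_of_div[OF pq] by simp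
  have "of_int (d * q) * s \<in> \<int>" if "s \<in> insert r R" for s
  proof (cases "s = r")
    case True
    then show ?thesis using q_r by (simp add: mult.assoc)
  next
    case False
    then have "of_int (d * q) * s = of_int q * (of_int d * s)" using that by simp
    then show ?thesis using False that d(2) by (metis Ints_mult Ints_of_int insertE)
  qed
  with d(1) q show ?case by (intro exI[of _ "d * q"]) simp
qed

lemma number_field_algebraic_int_multiple:
  assumes K: "number_field K" and x: "x \<in> K"
  obtains m :: nat where "m > 0" "algebraic_int (of_nat m * x)"
proof -
  from K obtain B where B: "finite B" "B \<subseteq> K"
    "\<And>y. y \<in> K \<Longrightarrow> \<exists>c :: complex \<Rightarrow> rat. y = (\<Sum>b\<in>B. of_rat (c b) * b)"
    unfolding number_field_def by blast
  have subfield: "subfield_of_complex K"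
    using K unfolding number_field_def by blast
  then have "\<forall>b\<in>B. \<exists>c. x * b = (\<Sum>b'\<in>B. of_rat (c b') * b')"
    using x B(2,3) unfolding subfield_of_complex_def by blast
  from bchoice[OF this]
  obtain C where C: "\<forall>b\<in>B. x * b = (\<Sum>b'\<in>B. of_rat (C b b') * b')" ..
  obtain d :: int where d: "d > 0" "\<And>b b'. b \<in> B \<Longrightarrow> b' \<in> B \<Longrightarrow> of_int d * C b b' \<in> \<int>"
    using rat_common_denominator[of "(\<lambda>(b, b'). C b b') ` (B \<times> B)"] B(1) by auto
  have "1 \<in> K"
    using subfield unfolding subfield_of_complex_def by blast
  then obtain c1 where "1 = (\<Sum>b\<in>B. of_rat (c1 b) * b)"
    using B(3) by blast
  then have nonzero: "\<exists>b\<in>B. b \<noteq> 0"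
    by (metis (no_types, lifting) mult_zero_right one_neq_zero sum.neutral)
  have "algebraic_int (of_int d * x)"
  proof (rule algebraic_int_if_int_span_stable[OF B(1) nonzero])
    fix b assume b: "b \<in> B"
    have "of_int d * x * b = (\<Sum>b'\<in>B. of_rat (of_int d * C b b') * b')"
      by (simp add: C[rule_format, OF b] mult.assoc sum_distrib_left of_rat_mult)
    also have "\<dots> \<in> int_span B"
    proof (intro int_module.span_sum Ints_mult_in_int_span)
      fix b' assume "b' \<in> B"
      with b d(2) obtain k where "of_int d * C b b' = of_int k"
        by (blast elim: Ints_cases)
      then show "of_rat (of_int d * C b b') \<in> \<int>"
        by simp
    qed
    finally show "of_int d * x * b \<in> int_span B" .
  qed
  with d(1) show ?thesis
    using that[of "nat d"] by (simp add: of_nat_nat)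
qed

lemma characters_linearly_independent:
  fixes \<sigma> :: "'i \<Rightarrow> 'a::monoid_mult \<Rightarrow> 'b::idom"
  assumes "finite S"
    and mult: "\<And>i x y. i \<in> S \<Longrightarrow> x \<in> M \<Longrightarrow> y \<in> M \<Longrightarrow> \<sigma> i (x * y) = \<sigma> i x * \<sigma> i y"
    and one: "\<And>i. i \<in> S \<Longrightarrow> \<sigma> i 1 = 1"
    and M: "1 \<in> M" "\<And>x y. x \<in> M \<Longrightarrow> y \<in> M \<Longrightarrow> x * y \<in> M"
    and distinct: "\<And>i j. i \<in> S \<Longrightarrow> j \<in> S \<Longrightarrow> i \<noteq> j \<Longrightarrow> \<exists>x\<in>M. \<sigma> i x \<noteq> \<sigma> j x"
    and vanish: "\<And>x. x \<in> M \<Longrightarrow> (\<Sum>i\<in>S. c i * \<sigma> i x) = 0"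
    and "i \<in> S"
  shows "c i = 0"
  using assms(1) mult one distinct vanish assms(8)
proof (induction S arbitrary: c i rule: finite_induct)
  case empty
  then show ?case by simp
next
  case (insert k S)
  have vanish_S: "c j = 0" if j: "j \<in> S" for j
  proof -
    from j insert.hyps(2) obtain y where y: "y \<in> M" "\<sigma> j y \<noteq> \<sigma> k y"
      using insert.prems(3)[of j k] by auto
    \<comment> \<open>The relation at \<open>y * x\<close> minus \<open>\<sigma> k y\<close> times the relation at \<open>x\<close> has no \<open>k\<close>-term.\<close>
    define d where "d l = c l * (\<sigma> l y - \<sigma> k y)" for l
    have "(\<Sum>l\<in>S. d l * \<sigma> l x) = 0" if x: "x \<in> M" for x
    proof -
      have "(\<Sum>l\<in>S. d l * \<sigma> l x) = (\<Sum>l\<in>insert k S. d l * \<sigma> l x)"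
        using insert.hyps by (simp add: d_def)
      also have "\<dots> = (\<Sum>l\<in>insert k S. c l * \<sigma> l (y * x))
          - \<sigma> k y * (\<Sum>l\<in>insert k S. c l * \<sigma> l x)"
        using x y insert.prems(1)
        by (simp add: d_def sum_distrib_left sum_subtractf algebra_simps)
      also have "\<dots> = 0"
        using x y M(2) insert.prems(4) by simp
      finally show ?thesis .
    qed
    then have "d j = 0"
      using insert.IH[of d j] insert.prems j by auto
    with y show "c j = 0" by (simp add: d_def)
  qed
  have "c k = c k * \<sigma> k 1" using insert.prems(2) by simp
  also have "\<dots> = (\<Sum>l\<in>insert k S. c l * \<sigma> l 1)"
    using insert.hyps vanish_S by simp
  also have "\<dots> = 0" using insert.prems(4) M(1) by blast
  finally show ?case using insert.prems(5) vanish_S by auto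
qed

section \<open>Convex sets containing segments in spanning directions\<close>

lemma zero_in_interior_symmetric_convex:
  fixes E :: "'a::euclidean_space set"
  assumes E: "convex E" "0 \<in> E" and symmetric: "\<And>v. v \<in> E \<Longrightarrow> - v \<in> E"
    and "span E = UNIV"
  shows "0 \<in> interior E"
proof -
  have "affine hull E = UNIV"
    using affine_hull_span_0[OF hull_inc[OF E(2)]] \<open>span E = UNIV\<close> by simp
  then have "rel_interior E = interior E"
    by (rule rel_interior_interior)
  moreover have "rel_interior E \<noteq> {}"
    using rel_interior_eq_empty[OF E(1)] E(2) by auto
  ultimately obtain p r where r: "r > 0" "ball p r \<subseteq> E"
    by (auto simp: mem_interior)
  have "ball 0 r \<subseteq> E"
  proof
    fix z :: 'a assume "z \<in> ball 0 r"
    then have "p + z \<in> E" "p - z \<in> E"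
      using r(2) by (auto simp: dist_norm subset_iff)
    then have "(1/2) *\<^sub>R (p + z) + (1/2) *\<^sub>R (- (p - z)) \<in> E"
      by (intro convexD[OF E(1)] symmetric) auto
    then show "z \<in> E"
      by (simp add: algebra_simps flip: scaleR_add_left)
  qed
  with r(1) show ?thesis
    by (auto simp: mem_interior)
qed

lemma mem_interior_convex_if_spanning_segments:
  fixes H :: "'a::euclidean_space set"
  assumes H: "convex H" "p \<in> H" and "span S = UNIV"
    and segment: "\<And>v. v \<in> S \<Longrightarrow> \<exists>t>0. p + t *\<^sub>R v \<in> H \<and> p - t *\<^sub>R v \<in> H"
  shows "p \<in> interior H"
proof -
  define E where "E = {v. p + v \<in> H \<and> p - v \<in> H}"
  have "convex E"
  proof (rule convexI)
    fix x y and u v :: real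
    assume "x \<in> E" "y \<in> E" "0 \<le> u" "0 \<le> v" "u + v = 1"
    then have "u *\<^sub>R (p + x) + v *\<^sub>R (p + y) \<in> H" "u *\<^sub>R (p - x) + v *\<^sub>R (p - y) \<in> H"
      using H(1) by (auto simp: E_def intro!: convexD)
    moreover have v: "v = 1 - u"
      using \<open>u + v = 1\<close> by simp
    ultimately show "u *\<^sub>R x + v *\<^sub>R y \<in> E"
      unfolding v by (simp add: E_def algebra_simps)
  qed
  have "S \<subseteq> span E"
  proof
    fix v assume "v \<in> S"
    then obtain t where t: "t > 0" "t *\<^sub>R v \<in> E"
      using segment unfolding E_def by auto
    then have "(1 / t) *\<^sub>R (t *\<^sub>R v) \<in> span E"
      by (intro span_mul span_base)
    with t(1) show "v \<in> span E" by simp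
  qed
  then have "span E = UNIV"
    using \<open>span S = UNIV\<close> span_mono[of S "span E"] by (auto simp: span_span)
  then have "0 \<in> interior E"
    using \<open>convex E\<close> H(2) by (intro zero_in_interior_symmetric_convex) (auto simp: E_def)
  moreover have "(+) p ` E \<subseteq> H"
    by (auto simp: E_def)
  then have "(+) p ` interior E \<subseteq> interior H"
    by (metis interior_mono interior_translation)
  ultimately show ?thesis
    by force
qed

section \<open>The Klein polyhedron of a totally real field\<close>

lemma ex_nat_multiple_dominates:
  fixes f g :: "'i::finite \<Rightarrow> real"
  assumes pos: "\<And>i. 0 < f i"
  obtains N :: nat where "N > 0" "\<And>i. \<bar>g i\<bar> < real N * f i"
proof -
  define S where "S = (\<Sum>i\<in>UNIV. \<bar>g i\<bar> / f i)"
  define N where "N = nat \<lceil>S\<rceil> + 1"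
  have "\<bar>g i\<bar> < real N * f i" for i
  proof -
    have "\<bar>g i\<bar> / f i \<le> S"
      unfolding S_def by (intro member_le_sum) (auto intro!: divide_nonneg_pos pos)
    also have "S < real N"
      unfolding N_def by linarith
    finally show ?thesis
      using pos[of i] by (simp add: divide_less_eq)
  qed
  then show ?thesis
    using that[of N] by (simp add: N_def)
qed

lemma convex_klein_polyhedron: "convex (klein_polyhedron K \<tau>)"
  by (simp add: klein_polyhedron_def)

lemma minkowski_in_klein_polyhedron:
  assumes "\<alpha> \<in> totally_positive_integers K \<tau>"
  shows "minkowski \<tau> \<alpha> \<in> klein_polyhedron K \<tau>"
  using assms unfolding klein_polyhedron_def totally_positive_integers_def
  by (intro hull_inc) (auto simp: minkowski_def)

locale totally_real_number_field =
  fixes K :: "complex set" and \<tau> :: "'n::finite \<Rightarrow> complex \<Rightarrow> complex"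
  assumes number_field: "number_field K"
    and totally_real: "totally_real K"
    and enumeration: "embedding_enumeration K \<tau>"
begin

abbreviation OK :: "complex set" where
  "OK \<equiv> ring_of_integers K"

abbreviation OK_pos :: "complex set" where
  "OK_pos \<equiv> totally_positive_integers K \<tau>"

lemma subfield: "subfield_of_complex K"
  using number_field unfolding number_field_def by blast

lemma zero_in_K: "0 \<in> K"
  and one_in_K: "1 \<in> K"
  and add_in_K: "x \<in> K \<Longrightarrow> y \<in> K \<Longrightarrow> x + y \<in> K"
  and mult_in_K: "x \<in> K \<Longrightarrow> y \<in> K \<Longrightarrow> x * y \<in> K"
  and uminus_in_K: "x \<in> K \<Longrightarrow> - x \<in> K"
  using subfield unfolding subfield_of_complex_def by blast+

lemma of_nat_in_K: "of_nat m \<in> K"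
  by (induction m) (simp_all add: zero_in_K one_in_K add_in_K)

lemma embedding_one: "\<tau> i 1 = 1"
  and embedding_add: "x \<in> K \<Longrightarrow> y \<in> K \<Longrightarrow> \<tau> i (x + y) = \<tau> i x + \<tau> i y"
  and embedding_mult: "x \<in> K \<Longrightarrow> y \<in> K \<Longrightarrow> \<tau> i (x * y) = \<tau> i x * \<tau> i y"
  using enumeration unfolding embedding_enumeration_def field_embedding_def by blast+

lemma embedding_zero: "\<tau> i 0 = 0"
  using embedding_add[OF zero_in_K zero_in_K, of i] by simp

lemma embedding_uminus:
  assumes "x \<in> K"
  shows "\<tau> i (- x) = - \<tau> i x"
proof -
  have "\<tau> i x + \<tau> i (- x) = 0"
    using embedding_add[OF assms uminus_in_K[OF assms], of i] by (simp add: embedding_zero)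
  then show ?thesis
    by (metis neg_eq_iff_add_eq_0)
qed

lemma embedding_of_nat: "\<tau> i (of_nat m) = of_nat m"
proof (induction m)
  case 0
  show ?case by (simp add: embedding_zero)
next
  case (Suc m)
  then show ?case
    using embedding_add[OF one_in_K of_nat_in_K, of i m] by (simp add: embedding_one add.commute)
qed

lemma embedding_real: "x \<in> K \<Longrightarrow> \<tau> i x \<in> \<real>"
  using totally_real enumeration
  unfolding totally_real_def embedding_enumeration_def by blast

lemma ring_of_integers_subset: "OK \<subseteq> K"
  by (auto simp: ring_of_integers_def)

lemma ring_of_integers_add: "x \<in> OK \<Longrightarrow> y \<in> OK \<Longrightarrow> x + y \<in> OK"
  by (simp add: ring_of_integers_def add_in_K algebraic_int_add)

lemma ring_of_integers_uminus: "x \<in> OK \<Longrightarrow> - x \<in> OK"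
  by (simp add: ring_of_integers_def uminus_in_K)

lemma ring_of_integers_of_nat_mult: "x \<in> OK \<Longrightarrow> of_nat m * x \<in> OK"
  by (simp add: ring_of_integers_def mult_in_K of_nat_in_K algebraic_int_mult)

lemma minkowski_add:
  "x \<in> K \<Longrightarrow> y \<in> K \<Longrightarrow> minkowski \<tau> (x + y) = minkowski \<tau> x + minkowski \<tau> y"
  by (simp add: minkowski_def embedding_add Finite_Cartesian_Product.vec_eq_iff)

lemma minkowski_uminus: "x \<in> K \<Longrightarrow> minkowski \<tau> (- x) = - minkowski \<tau> x"
  by (simp add: minkowski_def embedding_uminus Finite_Cartesian_Product.vec_eq_iff)

lemma minkowski_of_nat_mult:
  "x \<in> K \<Longrightarrow> minkowski \<tau> (of_nat m * x) = real m *\<^sub>R minkowski \<tau> x"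
  by (simp add: minkowski_def embedding_mult of_nat_in_K embedding_of_nat
      Finite_Cartesian_Product.vec_eq_iff)

text \<open>A vector orthogonal to the lattice gives a linear relation between the embeddings on
  \<open>O\<^sub>K\<close> (real because \<open>K\<close> is totally real), hence on \<open>K\<close> after clearing
  denominators; Dedekind's lemma forces it to vanish.\<close>

lemma span_minkowski_ring_of_integers: "span (minkowski \<tau> ` OK) = UNIV"
proof (rule ccontr)
  assume "span (minkowski \<tau> ` OK) \<noteq> UNIV"
  then obtain w :: "real ^ 'n" where w: "w \<noteq> 0"
    and orthogonal: "span (minkowski \<tau> ` OK) \<subseteq> {v. w \<bullet> v = 0}"
    using span_not_univ_subset_hyperplane by blast
  define c where "c i = complex_of_real (w $ i)" for i
  have vanish_OK: "(\<Sum>i\<in>UNIV. c i * \<tau> i y) = 0" if y: "y \<in> OK" for y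
  proof -
    have "minkowski \<tau> y \<in> span (minkowski \<tau> ` OK)"
      using y by (intro span_base) simp
    with orthogonal have "(\<Sum>i\<in>UNIV. w $ i * Re (\<tau> i y)) = 0"
      by (auto simp: inner_vec_def minkowski_def)
    moreover have "\<tau> i y \<in> \<real>" for i
      using embedding_real y ring_of_integers_subset by auto
    then have "(\<Sum>i\<in>UNIV. c i * \<tau> i y) = of_real (\<Sum>i\<in>UNIV. w $ i * Re (\<tau> i y))"
      by (simp add: c_def of_real_Re)
    ultimately show ?thesis
      by simp
  qed
  have vanish_K: "(\<Sum>i\<in>UNIV. c i * \<tau> i x) = 0" if x: "x \<in> K" for x
  proof -
    obtain m :: nat where m: "m > 0" "algebraic_int (of_nat m * x)"
      using number_field_algebraic_int_multiple[OF number_field x] by blast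
    then have "of_nat m * x \<in> OK"
      using x by (simp add: ring_of_integers_def mult_in_K of_nat_in_K)
    moreover have "(\<Sum>i\<in>UNIV. c i * \<tau> i (of_nat m * x)) = of_nat m * (\<Sum>i\<in>UNIV. c i * \<tau> i x)"
      by (simp add: embedding_mult[OF of_nat_in_K x] embedding_of_nat sum_distrib_left
          mult.left_commute)
    ultimately show ?thesis
      using vanish_OK m(1) by simp
  qed
  have distinct: "\<exists>x\<in>K. \<tau> i x \<noteq> \<tau> j x" if "i \<noteq> j" for i j
    using enumeration that unfolding embedding_enumeration_def by blast
  have "c i = 0" for i
    by (rule characters_linearly_independent[of UNIV K \<tau>])
      (simp_all add: embedding_mult embedding_one one_in_K mult_in_K distinct vanish_K)
  then have "w = 0"
    by (simp add: c_def Finite_Cartesian_Product.vec_eq_iff)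
  with w show False ..
qed

lemma totally_positive_add_dominating_multiple:
  assumes "\<beta> \<in> OK_pos" "\<gamma> \<in> OK_pos" "\<delta> \<in> OK"
    and dominating: "\<And>i. \<bar>Re (\<tau> i \<delta>)\<bar> < real N * Re (\<tau> i \<gamma>)"
  shows "\<beta> + of_nat N * \<gamma> + \<delta> \<in> OK_pos"
proof -
  have OK: "\<beta> \<in> OK" "\<gamma> \<in> OK" and pos: "0 < Re (\<tau> i \<beta>)" for i
    using assms(1,2) by (auto simp: totally_positive_integers_def)
  then have "\<beta> + of_nat N * \<gamma> + \<delta> \<in> OK"
    using assms(3) by (simp add: ring_of_integers_add ring_of_integers_of_nat_mult)
  moreover have K: "\<beta> \<in> K" "\<gamma> \<in> K" "\<delta> \<in> K"
    using OK assms(3) ring_of_integers_subset by auto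
  then have "\<tau> i (\<beta> + of_nat N * \<gamma> + \<delta>) = \<tau> i \<beta> + of_nat N * \<tau> i \<gamma> + \<tau> i \<delta>" for i
    by (simp add: embedding_add embedding_mult embedding_of_nat add_in_K mult_in_K of_nat_in_K)
  moreover have "0 < Re (\<tau> i \<beta>) + real N * Re (\<tau> i \<gamma>) + Re (\<tau> i \<delta>)" for i
    using pos[of i] dominating[of i] by linarith
  moreover have "\<tau> i (\<beta> + of_nat N * \<gamma> + \<delta>) \<in> \<real>" for i
    using K by (intro embedding_real) (simp add: add_in_K mult_in_K of_nat_in_K)
  ultimately show ?thesis
    unfolding totally_positive_integers_def by simp
qed

lemma minkowski_zero: "minkowski \<tau> 0 = 0"
  by (simp add: minkowski_def embedding_zero Finite_Cartesian_Product.vec_eq_iff)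

lemma zero_in_ring_of_integers: "0 \<in> OK"
  by (simp add: ring_of_integers_def zero_in_K)

lemma klein_polyhedron_shifted:
  assumes "\<beta> \<in> OK_pos" "\<gamma> \<in> OK_pos" "\<delta> \<in> OK" "N > 0"
    and dominating: "\<And>i. \<bar>Re (\<tau> i \<delta>)\<bar> < real N * Re (\<tau> i \<gamma>)"
  shows "minkowski \<tau> (\<beta> + \<gamma>) + (1 / real N) *\<^sub>R minkowski \<tau> \<delta> \<in> klein_polyhedron K \<tau>"
proof -
  define z where "z = \<beta> + of_nat N * \<gamma> + \<delta>"
  have K: "\<beta> \<in> K" "\<gamma> \<in> K" "\<delta> \<in> K"
    using assms(1-3) ring_of_integers_subset by (auto simp: totally_positive_integers_def)
  have "z \<in> OK_pos"
    unfolding z_def using assms(1-3) dominating by (rule totally_positive_add_dominating_multiple)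
  then have "(1 - 1 / real N) *\<^sub>R minkowski \<tau> \<beta> + (1 / real N) *\<^sub>R minkowski \<tau> z
      \<in> klein_polyhedron K \<tau>"
    using assms(1) \<open>N > 0\<close>
    by (intro convexD[OF convex_klein_polyhedron minkowski_in_klein_polyhedron
          minkowski_in_klein_polyhedron]) auto
  moreover have "minkowski \<tau> z = minkowski \<tau> \<beta> + real N *\<^sub>R minkowski \<tau> \<gamma> + minkowski \<tau> \<delta>"
    by (simp add: z_def K minkowski_add minkowski_of_nat_mult add_in_K mult_in_K of_nat_in_K)
  ultimately show ?thesis
    using \<open>N > 0\<close> by (simp add: minkowski_add[OF K(1,2)] scaleR_right_distrib
        scaleR_left_diff_distrib add.assoc)
qed

lemma minkowski_in_interior_klein_polyhedron:
  assumes \<beta>: "\<beta> \<in> OK_pos" and \<gamma>: "\<gamma> \<in> OK_pos"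
  shows "minkowski \<tau> (\<beta> + \<gamma>) \<in> interior (klein_polyhedron K \<tau>)"
proof (rule mem_interior_convex_if_spanning_segments[OF convex_klein_polyhedron _
      span_minkowski_ring_of_integers])
  have pos: "0 < Re (\<tau> i \<gamma>)" for i
    using \<gamma> by (simp add: totally_positive_integers_def)
  have "minkowski \<tau> (\<beta> + \<gamma>) + (1 / real 1) *\<^sub>R minkowski \<tau> 0 \<in> klein_polyhedron K \<tau>"
    by (rule klein_polyhedron_shifted[OF \<beta> \<gamma> zero_in_ring_of_integers])
      (simp_all add: embedding_zero pos)
  then show "minkowski \<tau> (\<beta> + \<gamma>) \<in> klein_polyhedron K \<tau>"
    by (simp add: minkowski_zero)
  fix v assume "v \<in> minkowski \<tau> ` OK"
  then obtain \<delta> where \<delta>: "\<delta> \<in> OK" "v = minkowski \<tau> \<delta>"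
    by blast
  obtain N :: nat where N: "N > 0" "\<And>i. \<bar>Re (\<tau> i \<delta>)\<bar> < real N * Re (\<tau> i \<gamma>)"
    using ex_nat_multiple_dominates[of "\<lambda>i. Re (\<tau> i \<gamma>)" "\<lambda>i. Re (\<tau> i \<delta>)"] pos by auto
  have "minkowski \<tau> (\<beta> + \<gamma>) + (1 / real N) *\<^sub>R v \<in> klein_polyhedron K \<tau>"
    using klein_polyhedron_shifted[OF \<beta> \<gamma> \<delta>(1) N] by (simp add: \<delta>(2))
  moreover have "\<delta> \<in> K"
    using \<delta>(1) ring_of_integers_subset by blast
  then have "minkowski \<tau> (\<beta> + \<gamma>) - (1 / real N) *\<^sub>R v \<in> klein_polyhedron K \<tau>"
    using klein_polyhedron_shifted[OF \<beta> \<gamma> ring_of_integers_uminus[OF \<delta>(1)] N(1)] N(2)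
    by (simp add: \<delta>(2) embedding_uminus minkowski_uminus)
  ultimately show "\<exists>t>0. minkowski \<tau> (\<beta> + \<gamma>) + t *\<^sub>R v \<in> klein_polyhedron K \<tau> \<and>
      minkowski \<tau> (\<beta> + \<gamma>) - t *\<^sub>R v \<in> klein_polyhedron K \<tau>"
    using N(1) by (intro exI[of _ "1 / real N"]) simp
qed

end

theorem theorem2p4:
  fixes K :: "complex set" and \<tau> :: "'n::finite \<Rightarrow> complex \<Rightarrow> complex" and \<alpha> :: complex
  assumes "number_field K"
    and "totally_real K"
    and "embedding_enumeration K \<tau>"
    and "\<alpha> \<in> totally_positive_integers K \<tau>"
    and "minkowski \<tau> \<alpha> \<in> sail K \<tau>"
  shows "indecomposable K \<tau> \<alpha>"
proof -
  interpret totally_real_number_field K \<tau>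
    using assms(1-3) by unfold_locales
  have "\<not> (\<exists>\<beta>\<in>OK_pos. \<exists>\<gamma>\<in>OK_pos. \<alpha> = \<beta> + \<gamma>)"
  proof
    assume "\<exists>\<beta>\<in>OK_pos. \<exists>\<gamma>\<in>OK_pos. \<alpha> = \<beta> + \<gamma>"
    then have "minkowski \<tau> \<alpha> \<in> interior (klein_polyhedron K \<tau>)"
      using minkowski_in_interior_klein_polyhedron by blast
    with assms(5) show False
      by (simp add: sail_def frontier_def)
  qed
  with assms(4) show ?thesis
    unfolding indecomposable_def by blast
qed

end
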